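(* For every integer $p\ge 3$, the cycle $C_p$ on $p$ vertices satisfies $$\gamma_{[3R]}(C_p)=\begin{cases}\left\lceil \frac{4p}{3}\right\rceil & \text{if } p\in\{4,5,7,10\} \text{ or } p\equiv 0\pmod 3,\\[0.5em] \left\lceil \frac{4p}{3}\right\rceil+1 & \text{if } p\notin\{4,5,7,10\} \text{ and } p\equiv 1,2\pmod 3.\end{cases}$$
   Context: For a graph $\Gamma=(V,E)$ and $h:V\to\{0,1,2,3,4\}$, let $AN(v)=\{w\in N(v):h(w)\ge 1\}$, $AN[v]=AN(v)\cup\{v\}$ and $h(S)=\sum_{u\in S}h(u)$. $h$ is a triple Roman dominating function (3RDF) if every $v$ with $h(v)<3$ satisfies $h(AN[v])\ge|AN(v)|+3$. The triple Roman domination number $\gamma_{[3R]}(\Gamma)$ is the minimum weight $h(V)$ of a 3RDF of $\Gamma$. *)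

theory Defs
  imports Complex_Main
begin

text \<open>A finite simple graph is given by a vertex set V and a symmetric, irreflexive
adjacency relation E. Open neighbourhood of v.\<close>

definition nbhd :: "'a set \<Rightarrow> ('a \<Rightarrow> 'a \<Rightarrow> bool) \<Rightarrow> 'a \<Rightarrow> 'a set" where
  "nbhd V E v = {w \<in> V. E v w}"

definition active_nbhd :: "'a set \<Rightarrow> ('a \<Rightarrow> 'a \<Rightarrow> bool) \<Rightarrow> ('a \<Rightarrow> nat) \<Rightarrow> 'a \<Rightarrow> 'a set" where
  "active_nbhd V E h v = {w \<in> nbhd V E v. h w \<ge> 1}"

text \<open>Triple Roman dominating function: h : V -> {0,..,4} such that every v with
h(v) < 3 satisfies h(AN[v]) >= |AN(v)| + 3. Values outside V are ignored
(only h restricted to V matters).\<close>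
definition is_3RDF :: "'a set \<Rightarrow> ('a \<Rightarrow> 'a \<Rightarrow> bool) \<Rightarrow> ('a \<Rightarrow> nat) \<Rightarrow> bool" where
  "is_3RDF V E h \<longleftrightarrow>
     (\<forall>v\<in>V. h v \<le> 4) \<and>
     (\<forall>v\<in>V. h v < 3 \<longrightarrow>
        sum h (insert v (active_nbhd V E h v)) \<ge> card (active_nbhd V E h v) + 3)"

definition weight :: "'a set \<Rightarrow> ('a \<Rightarrow> nat) \<Rightarrow> nat" where
  "weight V h = sum h V"

definition triple_roman_domination_number :: "'a set \<Rightarrow> ('a \<Rightarrow> 'a \<Rightarrow> bool) \<Rightarrow> nat" where
  "triple_roman_domination_number V E = (LEAST w. \<exists>h. is_3RDF V E h \<and> weight V h = w)"

definition cycle_adj :: "nat \<Rightarrow> nat \<Rightarrow> nat \<Rightarrow> bool" where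
  "cycle_adj p i j \<longleftrightarrow> i \<noteq> j \<and> (j = (i + 1) mod p \<or> i = (j + 1) mod p)"

end

theory Submission
  imports Defs
begin

(* Write the weight of h as (4p + E) / 3, where the total excess E is the sum of
   3 h(v) - 4 over all vertices; the claim is a lower bound on E depending on p mod 3.
   Upper bound: concatenations of blocks that start with 4 (resp. 3) and stay valid when
   followed by 4 (resp. 3), namely (4,0,0)^j behind (4,0,1,3,0) or (4,0,1,3,0,3,0), and
   (3,0), (3,0,2,2,0) for p = 4, 5, 7, 10.
   Lower bound: if all values are at most 2, any three consecutive ones sum to at least 5.
   Otherwise start the cycle at a vertex of value s >= 3 and bound the excess of valid
   paths from s by a dynamic programme over their last two values. Its layers are
   3-periodic from length 15 on, so evaluating finitely many cycle lengths settles all p. *)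

(* The condition h(AN[v]) >= |AN(v)| + 3 at a vertex of value b with neighbour values a, c:
   each active neighbour w contributes h w - 1, and truncated subtraction makes an inactive
   neighbour contribute 0. *)
definition dominated :: "nat \<Rightarrow> nat \<Rightarrow> nat \<Rightarrow> bool" where
  "dominated a b c \<longleftrightarrow> 3 \<le> b \<or> 3 \<le> b + (a - 1) + (c - 1)"

lemma Suc_mod_eq_Suc_mod_iff: "Suc a mod p = Suc b mod p \<longleftrightarrow> a mod p = b mod p"
  for a b p :: nat
  by (auto simp: mod_Suc split: if_splits)

lemma add_mod_eq_add_mod_iff: "(a + k) mod p = (b + k) mod p \<longleftrightarrow> a mod p = b mod p"
  for a b k p :: nat
  by (induction k) (simp_all add: Suc_mod_eq_Suc_mod_iff)

lemma sum_rotate_mod: "(\<Sum>i<p. g ((i + k) mod p)) = (\<Sum>i<p. g i)"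
  for g :: "nat \<Rightarrow> 'a::comm_monoid_add"
proof -
  have inj: "inj_on (\<lambda>i. (i + k) mod p) {..<p}"
    by (auto simp: inj_on_def add_mod_eq_add_mod_iff)
  moreover have "(\<lambda>i. (i + k) mod p) ` {..<p} = {..<p}"
    using inj by (intro endo_inj_surj) auto
  ultimately show ?thesis
    using sum.reindex[OF inj, of g] by simp
qed

lemma fold_min_le: "x \<in> set xs \<Longrightarrow> fold min xs d \<le> x"
  for x :: "'a::linorder"
  by (simp add: Min.set_eq_fold[symmetric] Min_le_iff)

lemma sum_active_eq:
  assumes "finite S"
  shows "sum h {w \<in> S. 1 \<le> h w} = card {w \<in> S. 1 \<le> h w} + (\<Sum>w\<in>S. h w - 1)"
proof -
  have "sum h {w \<in> S. 1 \<le> h w} = (\<Sum>w\<in>{w \<in> S. 1 \<le> h w}. 1 + (h w - 1))"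
    by (rule sum.cong) auto
  also have "\<dots> = card {w \<in> S. 1 \<le> h w} + (\<Sum>w\<in>{w \<in> S. 1 \<le> h w}. h w - 1)"
    by (simp only: sum.distrib card_eq_sum)
  also have "(\<Sum>w\<in>{w \<in> S. 1 \<le> h w}. h w - 1) = (\<Sum>w\<in>S. h w - 1)"
    using assms by (intro sum.mono_neutral_left) auto
  finally show ?thesis .
qed

lemma is_3RDF_iff_nbhd_sum:
  assumes "finite V" "\<And>v. \<not> E v v"
  shows "is_3RDF V E h \<longleftrightarrow>
    (\<forall>v\<in>V. h v \<le> 4) \<and> (\<forall>v\<in>V. h v < 3 \<longrightarrow> 3 \<le> h v + (\<Sum>w\<in>nbhd V E v. h w - 1))"
proof -
  have "sum h (insert v (active_nbhd V E h v)) = h v + card (active_nbhd V E h v)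
      + (\<Sum>w\<in>nbhd V E v. h w - 1)" for v
  proof -
    have "finite (nbhd V E v)" "v \<notin> active_nbhd V E h v"
      using assms by (auto simp: nbhd_def active_nbhd_def)
    then show ?thesis
      using sum_active_eq[of "nbhd V E v" h] by (simp add: active_nbhd_def)
  qed
  then show ?thesis
    unfolding is_3RDF_def by auto
qed

lemma cycle_adj_irrefl: "\<not> cycle_adj p v v"
  by (simp add: cycle_adj_def)

lemma nbhd_cycle:
  assumes "3 \<le> p"
  shows "nbhd {0..<p} (cycle_adj p) (Suc i mod p) = {i mod p, Suc (Suc i) mod p}"
proof -
  have "i mod p < p" using assms by simp
  show ?thesis
    using assms unfolding nbhd_def cycle_adj_def
    by (auto simp: mod_Suc Suc_mod_eq_Suc_mod_iff) (use \<open>i mod p < p\<close> in linarith)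
qed

lemma all_less_iff_all_Suc_mod:
  assumes "0 < (p::nat)"
  shows "(\<forall>v<p. P v) \<longleftrightarrow> (\<forall>i. P (Suc i mod p))"
proof
  assume "\<forall>v<p. P v"
  then show "\<forall>i. P (Suc i mod p)" using assms by simp
next
  assume all: "\<forall>i. P (Suc i mod p)"
  show "\<forall>v<p. P v"
  proof (intro allI impI)
    fix v assume "v < p"
    then have "Suc (v + p - 1) mod p = v" using assms by simp
    then show "P v" using all by metis
  qed
qed

lemma is_3RDF_cycle_iff:
  assumes "3 \<le> p"
  shows "is_3RDF {0..<p} (cycle_adj p) h \<longleftrightarrow> (\<forall>v<p. h v \<le> 4) \<and>
    (\<forall>i. dominated (h (i mod p)) (h (Suc i mod p)) (h (Suc (Suc i) mod p)))"
proof -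
  define dominated_at where "dominated_at v \<longleftrightarrow>
    (h v < 3 \<longrightarrow> 3 \<le> h v + (\<Sum>w\<in>nbhd {0..<p} (cycle_adj p) v. h w - 1))" for v
  have window: "dominated_at (Suc i mod p)
    \<longleftrightarrow> dominated (h (i mod p)) (h (Suc i mod p)) (h (Suc (Suc i) mod p))" for i
  proof -
    have "i mod p < p" using assms by simp
    then have "i mod p \<noteq> Suc (Suc i) mod p"
      using assms by (auto simp: mod_Suc)
    then show ?thesis
      using nbhd_cycle[OF assms, of i] unfolding dominated_def dominated_at_def by auto
  qed
  have "is_3RDF {0..<p} (cycle_adj p) h \<longleftrightarrow> (\<forall>v<p. h v \<le> 4) \<and> (\<forall>v<p. dominated_at v)"
    by (simp add: is_3RDF_iff_nbhd_sum cycle_adj_irrefl dominated_at_def Ball_def)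
  also have "(\<forall>v<p. dominated_at v) \<longleftrightarrow> (\<forall>i. dominated_at (Suc i mod p))"
    using assms by (intro all_less_iff_all_Suc_mod) simp
  finally show ?thesis
    by (simp only: window)
qed

fun dominated_word :: "nat list \<Rightarrow> bool" where
  "dominated_word (a # b # c # w) \<longleftrightarrow> dominated a b c \<and> dominated_word (b # c # w)"
| "dominated_word _ \<longleftrightarrow> True"

lemma dominated_word_nth:
  "dominated_word w \<longleftrightarrow>
    (\<forall>k. Suc (Suc k) < length w \<longrightarrow> dominated (w ! k) (w ! Suc k) (w ! Suc (Suc k)))"
proof (induction w rule: dominated_word.induct)
  case (1 a b c w)
  then show ?case
    by (auto simp: All_less_Suc2 less_Suc_eq_0_disj)
qed auto

lemma dominated_word_append:
  assumes "3 \<le> s" "dominated_word (xs @ [s])" "dominated_word (s # ys)"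
  shows "dominated_word (xs @ s # ys)"
  using assms
proof (induction xs rule: induct_list012)
  case (2 x)
  then show ?case
    by (cases ys) (auto simp: dominated_def)
next
  case (3 x y zs)
  then show ?case
    by (cases zs) auto
qed simp

lemma hd_concat_snoc: "\<forall>b\<in>set bs. b = [] \<or> hd b = s \<Longrightarrow> hd (concat bs @ [s]) = s"
  by (induction bs) (auto simp: hd_append)

lemma dominated_word_concat:
  assumes "3 \<le> s" "\<forall>b\<in>set bs. (b = [] \<or> hd b = s) \<and> dominated_word (b @ [s])"
  shows "dominated_word (concat bs @ [s])"
  using assms(2)
proof (induction bs)
  case (Cons b bs)
  have "hd (concat bs @ [s]) = s"
    using Cons.prems by (simp add: hd_concat_snoc)
  then obtain ys where "concat bs @ [s] = s # ys"
    by (metis append_is_Nil_conv hd_Cons_tl not_Cons_self2)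
  then show ?case
    using Cons dominated_word_append[OF assms(1), of b ys] by simp
qed simp

lemma exists_3RDF_cycle_word:
  assumes "length u = p" "3 \<le> p" "3 \<le> hd u" "dominated_word (u @ [hd u])" "\<forall>x\<in>set u. x \<le> 4"
  shows "\<exists>h. is_3RDF {0..<p} (cycle_adj p) h \<and> weight {0..<p} h = sum_list u"
proof -
  have hd_u: "hd u = u ! 0"
    using assms(1,2) by (cases u) auto
  have windows: "dominated ((u @ [hd u]) ! k) ((u @ [hd u]) ! Suc k) ((u @ [hd u]) ! Suc (Suc k))"
    if "Suc k < p" for k
    using assms(1,4) that unfolding dominated_word_nth by simp
  have "dominated (u ! (i mod p)) (u ! (Suc i mod p)) (u ! (Suc (Suc i) mod p))" for i
  proof (cases "Suc (i mod p) = p")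
    case True
    then have "Suc i mod p = 0" by (simp add: mod_Suc)
    then show ?thesis
      using assms(3) by (simp add: dominated_def hd_u)
  next
    case False
    then have "Suc (i mod p) < p"
      using assms(2) mod_less_divisor[of p i] by linarith
    then show ?thesis
      using windows[of "i mod p"] assms(1)
      by (auto simp: nth_append mod_Suc hd_u)
  qed
  moreover have "\<forall>v<p. u ! v \<le> 4"
    using assms(1,5) by auto
  ultimately have "is_3RDF {0..<p} (cycle_adj p) (\<lambda>v. u ! v)"
    unfolding is_3RDF_cycle_iff[OF assms(2)] by auto
  then show ?thesis
    using assms(1) by (auto simp: weight_def sum_list_sum_nth)
qed

lemma padded_block_word:
  assumes "1 \<le> j" "b = [] \<or> hd b = 4" "dominated_word (b @ [4])" "\<forall>x\<in>set b. x \<le> 4"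
  defines "u \<equiv> b @ concat (replicate j [4, 0, 0])"
  shows "hd u = 4" "dominated_word (u @ [4])" "\<forall>x\<in>set u. x \<le> 4"
    and "length u = length b + 3 * j" "sum_list u = sum_list b + 4 * j"
proof -
  show "hd u = 4"
    using assms(1,2) unfolding u_def by (cases j) (auto simp: hd_append)
  show "dominated_word (u @ [4])"
    using dominated_word_concat[of 4 "b # replicate j [4, 0, 0]"] assms(2,3)
    unfolding u_def by (simp add: dominated_def)
  have "length (concat (replicate j [4, 0, 0])) = 3 * j \<and>
      sum_list (concat (replicate j [4, 0, 0])) = 4 * j"
    by (induction j) auto
  then show "\<forall>x\<in>set u. x \<le> 4" "length u = length b + 3 * j" "sum_list u = sum_list b + 4 * j"
    using assms(4) unfolding u_def by auto
qed

definition gamma_cycle :: "nat \<Rightarrow> nat" where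
  "gamma_cycle p = (4 * p + 2) div 3 + (if p \<in> {4, 5, 7, 10} \<or> p mod 3 = 0 then 0 else 1)"

lemma exists_3RDF_cycle_exceptional:
  assumes "p \<in> {4, 5, 7, 10}"
  shows "\<exists>h. is_3RDF {0..<p} (cycle_adj p) h \<and> weight {0..<p} h = gamma_cycle p"
  using assms
proof (elim insertE emptyE)
  show ?thesis if "p = 4"
    using exists_3RDF_cycle_word[of "[3, 0, 3, 0]" p] that
    by (simp add: gamma_cycle_def dominated_def)
  show ?thesis if "p = 5"
    using exists_3RDF_cycle_word[of "[3, 0, 2, 2, 0]" p] that
    by (simp add: gamma_cycle_def dominated_def)
  show ?thesis if "p = 7"
    using exists_3RDF_cycle_word[of "[3, 0, 2, 2, 0, 3, 0]" p] that
    by (simp add: gamma_cycle_def dominated_def)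
  show ?thesis if "p = 10"
    using exists_3RDF_cycle_word[of "[3, 0, 2, 2, 0, 3, 0, 2, 2, 0]" p] that
    by (simp add: gamma_cycle_def dominated_def)
qed

lemma exists_3RDF_cycle_padded:
  assumes "3 \<le> p" "p \<notin> {4, 5, 7, 10}"
  shows "\<exists>h. is_3RDF {0..<p} (cycle_adj p) h \<and> weight {0..<p} h = gamma_cycle p"
proof -
  have padded: ?thesis if "p = length b + 3 * j" "1 \<le> j" "b = [] \<or> hd b = 4"
    "dominated_word (b @ [4])" "\<forall>x\<in>set b. x \<le> 4" "sum_list b + 4 * j = gamma_cycle p" for b j
    using exists_3RDF_cycle_word[of "b @ concat (replicate j [4, 0, 0])" p]
      padded_block_word[OF that(2-5)] that(1,6) assms(1)
    by simp
  define j where "j = p div 3"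
  have p_j: "p = 3 * j + p mod 3"
    unfolding j_def by simp
  consider "p mod 3 = 0" | "p mod 3 = 2" | "p mod 3 = 1"
    by linarith
  then show ?thesis
  proof cases
    case 1
    then have "p = 3 * j" "1 \<le> j" "gamma_cycle p = 4 * j"
      using p_j assms by (auto simp: gamma_cycle_def)
    then show ?thesis
      by (intro padded[of "[]" j]) auto
  next
    case 2
    then have "p = 5 + 3 * (j - 1)" "2 \<le> j" "gamma_cycle p = 8 + 4 * (j - 1)"
      using p_j assms by (auto simp: gamma_cycle_def)
    then show ?thesis
      by (intro padded[of "[4, 0, 1, 3, 0]" "j - 1"]) (auto simp: dominated_def)
  next
    case 3
    then have "p = 7 + 3 * (j - 2)" "4 \<le> j" "gamma_cycle p = 11 + 4 * (j - 2)"
      using p_j assms by (auto simp: gamma_cycle_def)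
    then show ?thesis
      by (intro padded[of "[4, 0, 1, 3, 0, 3, 0]" "j - 2"]) (auto simp: dominated_def)
  qed
qed

lemma exists_3RDF_cycle_weight_gamma:
  assumes "3 \<le> p"
  shows "\<exists>h. is_3RDF {0..<p} (cycle_adj p) h \<and> weight {0..<p} h = gamma_cycle p"
  using exists_3RDF_cycle_exceptional exists_3RDF_cycle_padded[OF assms] by blast

definition excess :: "nat \<Rightarrow> int" where
  "excess x = 3 * int x - 4"

(* Layers are indexed by the last two values of a path. The default 5 of the minimum only
   matters for unreachable pairs; any value would keep path_bound_le true. *)
definition dp_step :: "int list list \<Rightarrow> int list list" where
  "dp_step L = map (\<lambda>b. map (\<lambda>c.
     fold min (map (\<lambda>a. L ! a ! b + excess c) (filter (\<lambda>a. dominated a b c) [0..<5])) 5)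
     [0..<5]) [0..<5]"

primrec path_bound :: "nat \<Rightarrow> nat \<Rightarrow> int list list" where
  "path_bound s 0 = map (\<lambda>a. map (\<lambda>b. if a = s then excess b else 5) [0..<5]) [0..<5]"
| "path_bound s (Suc n) = dp_step (path_bound s n)"

definition closing_bound :: "nat \<Rightarrow> int list list \<Rightarrow> int" where
  "closing_bound s L = excess s +
     fold min [L ! a ! b. a \<leftarrow> [0..<5], b \<leftarrow> [0..<5], dominated a b s] 5"

lemma path_bound_le:
  assumes "\<forall>i. z i \<le> 4" "\<forall>i. dominated (z i) (z (Suc i)) (z (Suc (Suc i)))" "z 0 = s"
  shows "path_bound s n ! z n ! z (Suc n) \<le> (\<Sum>i\<le>n. excess (z (Suc i)))"
proof -
  have lt5: "z i < 5" for i
    using spec[OF assms(1), of i] by linarith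
  show ?thesis
  proof (induction n)
    case 0
    show ?case using assms(3) lt5[of 0] lt5[of 1] by simp
  next
    case (Suc n)
    have "path_bound s (Suc n) ! z (Suc n) ! z (Suc (Suc n))
        \<le> path_bound s n ! z n ! z (Suc n) + excess (z (Suc (Suc n)))"
      using assms(2) lt5 unfolding path_bound.simps dp_step_def by (auto intro!: fold_min_le)
    then show ?case using Suc.IH by simp
  qed
qed

lemma closing_bound_le:
  assumes "\<forall>i. z i \<le> 4" "\<forall>i. dominated (z i) (z (Suc i)) (z (Suc (Suc i)))" "z 0 = s"
    and "z (Suc (Suc m)) = s"
  shows "closing_bound s (path_bound s m) \<le> (\<Sum>i<Suc (Suc m). excess (z i))"
proof -
  have "z m < 5" "z (Suc m) < 5"
    using spec[OF assms(1), of m] spec[OF assms(1), of "Suc m"] by linarith+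
  then have "fold min [path_bound s m ! a ! b. a \<leftarrow> [0..<5], b \<leftarrow> [0..<5], dominated a b s] 5
      \<le> path_bound s m ! z m ! z (Suc m)"
    using assms(2,4) by (intro fold_min_le) force
  also have "\<dots> \<le> (\<Sum>i\<le>m. excess (z (Suc i)))"
    using path_bound_le[OF assms(1-3)] .
  moreover have "(\<Sum>i<Suc (Suc m). excess (z i)) = excess s + (\<Sum>i\<le>m. excess (z (Suc i)))"
    using assms(3) by (subst sum.lessThan_Suc_shift) (simp add: lessThan_Suc_atMost)
  ultimately show ?thesis
    by (simp add: closing_bound_def)
qed

lemma path_bound_periodic:
  assumes "s \<in> {3, 4}" "15 \<le> n"
  shows "path_bound s (n + 3) = path_bound s n"
  using assms(2)
proof (induction n rule: nat_induct_at_least)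
  case base
  have "path_bound 3 18 = path_bound 3 15" "path_bound 4 18 = path_bound 4 15"
    by code_simp+
  then show ?case using assms(1) by auto
next
  case (Suc n)
  then show ?case by (simp only: add_Suc path_bound.simps)
qed

lemma gamma_cycle_add_3:
  assumes "11 \<le> p"
  shows "gamma_cycle (p + 3) = gamma_cycle p + 4"
proof -
  have "(4 * (p + 3) + 2) div 3 = (4 * p + 2) div 3 + 4"
    by simp
  then show ?thesis
    using assms by (simp add: gamma_cycle_def)
qed

lemma closing_bound_ge_short_cycles:
  assumes "s \<in> {3, 4}" "1 \<le> m" "m < 18"
  shows "3 * int (gamma_cycle (m + 2)) - 4 * int (m + 2) \<le> closing_bound s (path_bound s m)"
  using assms by (auto simp: less_Suc_eq numeral_eq_Suc) code_simp+

lemma closing_bound_ge: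
  assumes "s \<in> {3, 4}" "1 \<le> m"
  shows "3 * int (gamma_cycle (m + 2)) - 4 * int (m + 2) \<le> closing_bound s (path_bound s m)"
  using assms(2)
proof (induction m rule: less_induct)
  case (less m)
  show ?case
  proof (cases "m < 18")
    case True
    then show ?thesis using closing_bound_ge_short_cycles assms(1) less.prems by blast
  next
    case False
    define n where "n = m - 3"
    have m: "m = n + 3" "15 \<le> n"
      using False unfolding n_def by simp_all
    have "path_bound s m = path_bound s n"
      using path_bound_periodic[OF assms(1) m(2)] m(1) by simp
    moreover have "gamma_cycle (m + 2) = gamma_cycle (n + 2) + 4"
      using gamma_cycle_add_3[of "n + 2"] m by simp
    moreover have "3 * int (gamma_cycle (n + 2)) - 4 * int (n + 2) \<le> closing_bound s (path_bound s n)"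
      using less.IH[of n] m by simp
    ultimately show ?thesis
      using m by simp
  qed
qed

lemma gamma_cycle_le_sum_with_large_value:
  assumes "3 \<le> p" "is_3RDF {0..<p} (cycle_adj p) h" "k < p" "3 \<le> h k"
  shows "gamma_cycle p \<le> sum h {0..<p}"
proof -
  define z where "z i = h ((i + k) mod p)" for i
  have h: "\<forall>v<p. h v \<le> 4" "\<forall>i. dominated (h (i mod p)) (h (Suc i mod p)) (h (Suc (Suc i) mod p))"
    using assms(2) unfolding is_3RDF_cycle_iff[OF assms(1)] by auto
  have z_le: "\<forall>i. z i \<le> 4"
    using h(1) assms(1) by (simp add: z_def)
  have z_dom: "\<forall>i. dominated (z i) (z (Suc i)) (z (Suc (Suc i)))"
    using h(2) by (simp add: z_def)
  define m where "m = p - 2"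
  have p_m: "p = Suc (Suc m)" "1 \<le> m"
    using assms(1) unfolding m_def by simp_all
  have z_ends: "z 0 = h k" "z (Suc (Suc m)) = h k"
    using assms(3) by (simp_all add: z_def flip: p_m(1))
  have "h k \<in> {3, 4}"
    using assms(3,4) h(1) by auto
  then have "3 * int (gamma_cycle p) - 4 * int p \<le> closing_bound (h k) (path_bound (h k) m)"
    using closing_bound_ge[of "h k" m] p_m by simp
  also have "\<dots> \<le> (\<Sum>i<p. excess (z i))"
    using closing_bound_le[OF z_le z_dom z_ends] p_m(1) by simp
  also have "\<dots> = 3 * int (\<Sum>i<p. z i) - 4 * int p"
    by (simp add: excess_def sum_subtractf sum_distrib_left)
  also have "(\<Sum>i<p. z i) = sum h {0..<p}"
    unfolding z_def sum_rotate_mod by (simp add: atLeast0LessThan)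
  finally show ?thesis
    by linarith
qed

lemma small_window_sum_ge_5:
  assumes "a \<le> 2" "b \<le> 2" "c \<le> 2" "d \<le> 2" "e \<le> 2"
    and "dominated a b c" "dominated b c d" "dominated c d e"
  shows "5 \<le> b + c + d"
  using assms unfolding dominated_def by arith

lemma gamma_cycle_le_five_thirds:
  assumes "3 \<le> p"
  shows "3 * gamma_cycle p \<le> 5 * p"
proof (cases "5 \<le> p")
  case True
  have "gamma_cycle p \<le> (4 * p + 2) div 3 + 1" "3 * ((4 * p + 2) div 3) \<le> 4 * p + 2"
    by (simp_all add: gamma_cycle_def)
  then show ?thesis
    using True by linarith
next
  case False
  then have "p = 3 \<or> p = 4"
    using assms by auto
  then show ?thesis
    by (auto simp: gamma_cycle_def)
qed

lemma gamma_cycle_le_sum_small_values: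
  assumes "3 \<le> p" "is_3RDF {0..<p} (cycle_adj p) h" "\<forall>v<p. h v \<le> 2"
  shows "gamma_cycle p \<le> sum h {0..<p}"
proof -
  define z where "z i = h (i mod p)" for i
  have z_dom: "dominated (z i) (z (Suc i)) (z (Suc (Suc i)))" for i
    using assms(2) unfolding is_3RDF_cycle_iff[OF assms(1)] z_def by blast
  have z_le: "z i \<le> 2" for i
    using assms(1,3) by (simp add: z_def)
  have z_rotate: "(\<Sum>i<p. z (i + k)) = sum h {0..<p}" for k
    unfolding z_def sum_rotate_mod by (simp add: atLeast0LessThan)
  have "5 * p = (\<Sum>i<p. 5)"
    by simp
  also have "\<dots> \<le> (\<Sum>i<p. z (i + 1) + z (i + 2) + z (i + 3))"
    using small_window_sum_ge_5[OF z_le z_le z_le z_le z_le z_dom z_dom z_dom]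
    by (intro sum_mono) (simp add: numeral_eq_Suc)
  also have "\<dots> = 3 * sum h {0..<p}"
    by (simp only: sum.distrib z_rotate)
  finally show ?thesis
    using gamma_cycle_le_five_thirds[OF assms(1)] by linarith
qed

lemma gamma_cycle_le_weight:
  assumes "3 \<le> p" "is_3RDF {0..<p} (cycle_adj p) h"
  shows "gamma_cycle p \<le> weight {0..<p} h"
proof (cases "\<exists>k<p. 3 \<le> h k")
  case True
  then show ?thesis
    using gamma_cycle_le_sum_with_large_value[OF assms] by (auto simp: weight_def)
next
  case False
  then have "\<forall>v<p. h v \<le> 2"
    by (auto simp: not_le)
  then show ?thesis
    using gamma_cycle_le_sum_small_values[OF assms] by (simp add: weight_def)
qed

lemma nat_ceiling_four_thirds: "nat \<lceil>4 * real p / 3\<rceil> = (4 * p + 2) div 3"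
proof -
  define q where "q = (4 * p + 2) div 3"
  have "3 * q \<le> 4 * p + 2" "4 * p \<le> 3 * q"
    unfolding q_def by auto
  then have "\<lceil>4 * real p / 3\<rceil> = int q"
    by (intro ceiling_unique) linarith+
  then show ?thesis
    by (simp add: q_def)
qed

theorem proposition22:
  fixes p :: nat
  assumes "p \<ge> 3"
  shows "triple_roman_domination_number {0..<p} (cycle_adj p) =
    (if p \<in> {4, 5, 7, 10} \<or> p mod 3 = 0
     then nat \<lceil>4 * real p / 3\<rceil>
     else nat \<lceil>4 * real p / 3\<rceil> + 1)"
proof -
  have "triple_roman_domination_number {0..<p} (cycle_adj p) = gamma_cycle p"
    unfolding triple_roman_domination_number_def
    using exists_3RDF_cycle_weight_gamma[OF assms] gamma_cycle_le_weight[OF assms]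
    by (intro Least_equality) auto
  then show ?thesis
    by (simp add: gamma_cycle_def nat_ceiling_four_thirds)
qed

end
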